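(* An automaton $\mathcal{A}=\langle Q,A,\cdot,q_0,F\rangle$ is quasi-zero if and only if its quotient automaton $\mathcal{A}/\!\sim$ (which is the minimal automaton of $L(\mathcal{A})$) is a zero automaton.
   Context: Automata are complete, deterministic, finite, accessible. For a state $q$, $\mathrm{Fut}(q)=\{w: q\cdot w\in F\}$. The Nerode equivalence is $p\sim q$ iff $\mathrm{Fut}(p)=\mathrm{Fut}(q)$; the quotient automaton $\mathcal{A}/\!\sim$ has states the classes $[q]$, initial state $[q_0]$, final states $\{[q]:q\in F\}$ and transitions $[p]\cdot a=[p\cdot a]$. A strongly connected sink component is a nonempty $P\subseteq Q$ such that every state of $P$ is reachable from every other state of $P$ and no state outside $P$ is reachable from $P$; $\mathrm{Sink}(\mathcal{A})$ is the family of these. $\mathcal{A}$ is quasi-zero if either $\bigcup\mathrm{Sink}(\mathcal{A})\subseteq F$ or $\bigcup\mathrm{Sink}(\mathcal{A})\cap F=\emptyset$. A zero automaton is an automaton with a sink state ($q\cdot a=q$ for all $a$) and a synchronising word (a word $w$ with $p\cdot w$ the same for all $p$). *)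

theory Defs
  imports Main
begin

record ('q, 'a) dfa =
  states :: "'q set"
  alph   :: "'a set"
  trans  :: "'q \<Rightarrow> 'a \<Rightarrow> 'q"
  init   :: "'q"
  final  :: "'q set"

definition run :: "('q, 'a, 'z) dfa_scheme \<Rightarrow> 'q \<Rightarrow> 'a list \<Rightarrow> 'q" where
  "run M q w = foldl (trans M) q w"

definition wf_dfa :: "('q, 'a) dfa \<Rightarrow> bool" where
  "wf_dfa M \<longleftrightarrow> finite (states M) \<and> finite (alph M) \<and> init M \<in> states M
     \<and> final M \<subseteq> states M
     \<and> (\<forall>q\<in>states M. \<forall>a\<in>alph M. trans M q a \<in> states M)
     \<and> (\<forall>q\<in>states M. \<exists>w\<in>lists (alph M). run M (init M) w = q)"

definition Fut :: "('q, 'a) dfa \<Rightarrow> 'q \<Rightarrow> 'a list set" where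
  "Fut M q = {w \<in> lists (alph M). run M q w \<in> final M}"

definition nerode :: "('q, 'a) dfa \<Rightarrow> ('q \<times> 'q) set" where
  "nerode M = {(p, q). p \<in> states M \<and> q \<in> states M \<and> Fut M p = Fut M q}"

text \<open>Quotient automaton A/~ : states are Nerode classes, [p].a = [p.a]
  (written as the union of the classes of p.a for p in the class, which is
  the single class [p.a] since ~ is a congruence).\<close>
definition quotient :: "('q, 'a) dfa \<Rightarrow> ('q set, 'a) dfa" where
  "quotient M = \<lparr> states = states M // nerode M,
                  alph = alph M,
                  trans = (\<lambda>C a. nerode M `` ((\<lambda>p. trans M p a) ` C)),
                  init = nerode M `` {init M},
                  final = {nerode M `` {q} | q. q \<in> final M} \<rparr>"

definition Sink :: "('q, 'a) dfa \<Rightarrow> 'q set set" where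
  "Sink M = {P. P \<noteq> {} \<and> P \<subseteq> states M
     \<and> (\<forall>p\<in>P. \<forall>q\<in>P. \<exists>w\<in>lists (alph M). run M p w = q)
     \<and> (\<forall>p\<in>P. \<forall>w\<in>lists (alph M). run M p w \<in> P)}"

definition quasi_zero :: "('q, 'a) dfa \<Rightarrow> bool" where
  "quasi_zero M \<longleftrightarrow> \<Union>(Sink M) \<subseteq> final M \<or> \<Union>(Sink M) \<inter> final M = {}"

definition zero_automaton :: "('q, 'a) dfa \<Rightarrow> bool" where
  "zero_automaton M \<longleftrightarrow>
     (\<exists>z\<in>states M. \<forall>a\<in>alph M. trans M z a = z)
     \<and> (\<exists>w\<in>lists (alph M). \<exists>r. \<forall>p\<in>states M. run M p w = r)"

end

theory Submission
  imports Defs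
begin

text \<open>All states lying in strongly connected sink components of a quasi-zero automaton
  have the same future (every word, or no word), so they form a single Nerode class; this
  class is a sink state of the quotient. Since from every state some word leads into a sink
  component, and sink components are closed, one word sends all states there at once, which
  synchronises the quotient. Conversely, if the quotient has a sink class \<open>Z\<close> and a
  synchronising word \<open>w\<close>, then \<open>w\<close> maps every class to \<open>Z\<close>. A state \<open>p\<close> of a sink component
  can be recovered from \<open>p \<cdot> w\<close> by some word \<open>v\<close>, so the class of \<open>p\<close> equals the class of
  \<open>p \<cdot> wv\<close>, which is \<open>Z\<close>; hence all sink states agree on finality.\<close>

lemma run_Nil [simp]: "run M q [] = q"
  by (simp add: run_def)

lemma run_Cons [simp]: "run M q (a # w) = run M (trans M q a) w"
  by (simp add: run_def)

lemma run_append: "run M q (u @ v) = run M (run M q u) v"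
  by (simp add: run_def)

lemma run_in_states:
  assumes "wf_dfa M" "q \<in> states M" "w \<in> lists (alph M)"
  shows "run M q w \<in> states M"
  using assms(2,3) by (induction w arbitrary: q) (use assms(1) in \<open>auto simp: wf_dfa_def\<close>)

lemma run_fixed_state:
  assumes "\<forall>a\<in>alph M. trans M z a = z" "w \<in> lists (alph M)"
  shows "run M z w = z"
  using assms(2) by (induction w) (simp_all add: assms(1))

lemma synchronising_word_reaches_fixed_state:
  assumes "z \<in> states M" "\<forall>a\<in>alph M. trans M z a = z" "w \<in> lists (alph M)"
    and "\<forall>p\<in>states M. run M p w = r" "p \<in> states M"
  shows "run M p w = z"
  using assms run_fixed_state[of M z w] by metis

lemma equiv_nerode: "equiv (states M) (nerode M)"
  by (rule equivI) (auto simp: nerode_def refl_on_def sym_def intro!: transI)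

lemma Fut_trans:
  assumes "a \<in> alph M"
  shows "Fut M (trans M p a) = {w. a # w \<in> Fut M p}"
  using assms by (auto simp: Fut_def)

lemma nerode_trans:
  assumes "wf_dfa M" "(p, q) \<in> nerode M" "a \<in> alph M"
  shows "(trans M p a, trans M q a) \<in> nerode M"
  using assms by (auto simp: nerode_def wf_dfa_def Fut_trans)

lemma nerode_final_iff:
  assumes "(p, q) \<in> nerode M"
  shows "p \<in> final M \<longleftrightarrow> q \<in> final M"
proof -
  have "[] \<in> Fut M p \<longleftrightarrow> [] \<in> Fut M q"
    using assms by (simp add: nerode_def)
  then show ?thesis
    by (simp add: Fut_def)
qed

lemma states_quotient [simp]: "states (quotient M) = states M // nerode M"
  by (simp add: quotient_def)

lemma alph_quotient [simp]: "alph (quotient M) = alph M"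
  by (simp add: quotient_def)

lemma trans_quotient_class:
  assumes "wf_dfa M" "p \<in> states M" "a \<in> alph M"
  shows "trans (quotient M) (nerode M `` {p}) a = nerode M `` {trans M p a}"
proof -
  have class_trans: "nerode M `` {trans M q a} = nerode M `` {trans M p a}"
    if "q \<in> nerode M `` {p}" for q
  proof -
    have "(trans M p a, trans M q a) \<in> nerode M"
      using nerode_trans[OF assms(1) _ assms(3)] that by simp
    then show ?thesis
      using equiv_class_eq[OF equiv_nerode] by metis
  qed
  have "nerode M `` ((\<lambda>q. trans M q a) ` (nerode M `` {p}))
      = (\<Union>q\<in>nerode M `` {p}. nerode M `` {trans M q a})"
    by blast
  also have "\<dots> = (\<Union>q\<in>nerode M `` {p}. nerode M `` {trans M p a})"
    using class_trans by (rule SUP_cong[OF refl])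
  also have "\<dots> = nerode M `` {trans M p a}"
    using assms(2) by (auto simp: nerode_def)
  finally show ?thesis
    by (simp add: quotient_def)
qed

lemma run_quotient_class:
  assumes "wf_dfa M" "p \<in> states M" "w \<in> lists (alph M)"
  shows "run (quotient M) (nerode M `` {p}) w = nerode M `` {run M p w}"
  using assms(2,3)
proof (induction w arbitrary: p)
  case (Cons a w)
  then have "trans M p a \<in> states M"
    using assms(1) by (auto simp: wf_dfa_def)
  with Cons show ?case
    by (simp add: trans_quotient_class[OF assms(1)])
qed simp

lemma run_in_Union_Sink:
  assumes "p \<in> \<Union>(Sink M)" "w \<in> lists (alph M)"
  shows "run M p w \<in> \<Union>(Sink M)"
proof -
  obtain P where "P \<in> Sink M" "p \<in> P"
    using assms(1) by blast
  then show ?thesis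
    using assms(2) unfolding Sink_def by blast
qed

definition reachable :: "('q, 'a) dfa \<Rightarrow> 'q \<Rightarrow> 'q set" where
  "reachable M p = {run M p w | w. w \<in> lists (alph M)}"

lemma reachable_refl: "p \<in> reachable M p"
  unfolding reachable_def by (auto intro: exI[of _ "[]"])

lemma reachable_subset_states:
  "wf_dfa M \<Longrightarrow> p \<in> states M \<Longrightarrow> reachable M p \<subseteq> states M"
  using run_in_states[of M p] by (auto simp: reachable_def)

lemma reachable_trans:
  assumes "q \<in> reachable M p"
  shows "reachable M q \<subseteq> reachable M p"
proof
  fix x
  assume "x \<in> reachable M q"
  moreover obtain u where "u \<in> lists (alph M)" "q = run M p u"
    using assms by (auto simp: reachable_def)
  ultimately obtain v where "v \<in> lists (alph M)" "x = run M p (u @ v)"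
    by (auto simp: reachable_def run_append)
  then show "x \<in> reachable M p"
    using \<open>u \<in> lists (alph M)\<close> unfolding reachable_def by (auto intro!: exI[of _ "u @ v"])
qed

lemma reachable_in_Sink:
  assumes "wf_dfa M" "p \<in> states M" "\<And>q. q \<in> reachable M p \<Longrightarrow> reachable M q = reachable M p"
  shows "reachable M p \<in> Sink M"
proof -
  have "\<exists>w\<in>lists (alph M). run M x w = y" if "x \<in> reachable M p" "y \<in> reachable M p" for x y
  proof -
    have "y \<in> reachable M x"
      using assms(3)[OF that(1)] that(2) by simp
    then show ?thesis
      by (auto simp: reachable_def)
  qed
  moreover have "run M x w \<in> reachable M p" if "x \<in> reachable M p" "w \<in> lists (alph M)" for x w
    using reachable_trans[OF that(1)] that(2) by (auto simp: reachable_def)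
  ultimately show ?thesis
    using reachable_refl[of p M] reachable_subset_states[OF assms(1,2)]
    unfolding Sink_def by blast
qed

text \<open>A reachable state whose reachable set has least cardinality spans a sink component.\<close>

lemma exists_run_into_Sink:
  assumes "wf_dfa M" "s \<in> states M"
  shows "\<exists>w\<in>lists (alph M). run M s w \<in> \<Union>(Sink M)"
proof -
  obtain p where p: "p \<in> reachable M s"
    and least: "\<And>q. q \<in> reachable M s \<Longrightarrow> card (reachable M p) \<le> card (reachable M q)"
    using ex_has_least_nat[of "\<lambda>p. p \<in> reachable M s" s "\<lambda>p. card (reachable M p)"]
      reachable_refl[of s M] by blast
  have p_state: "p \<in> states M"
    using p reachable_subset_states[OF assms] by blast
  have "finite (reachable M p)"
    using reachable_subset_states[OF assms(1) p_state] assms(1)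
    by (auto simp: wf_dfa_def intro: finite_subset)
  moreover have "card (reachable M p) \<le> card (reachable M q)" if "q \<in> reachable M p" for q
    using least reachable_trans[OF p] that by blast
  ultimately have "reachable M q = reachable M p" if "q \<in> reachable M p" for q
    using card_seteq reachable_trans[OF that] that by blast
  then have "reachable M p \<in> Sink M"
    by (rule reachable_in_Sink[OF assms(1) p_state])
  moreover obtain u where "u \<in> lists (alph M)" "run M s u = p"
    using p by (auto simp: reachable_def)
  ultimately show ?thesis
    using reachable_refl[of p M] by blast
qed

lemma exists_word_into_Sink:
  assumes "wf_dfa M" "finite S" "S \<subseteq> states M"
  shows "\<exists>w\<in>lists (alph M). \<forall>p\<in>S. run M p w \<in> \<Union>(Sink M)"
  using assms(2,3)
proof (induction S rule: finite_induct)
  case empty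
  then show ?case
    by (auto intro: exI[of _ "[]"])
next
  case (insert x S)
  then obtain w where w: "w \<in> lists (alph M)" "\<forall>p\<in>S. run M p w \<in> \<Union>(Sink M)"
    by auto
  have "run M x w \<in> states M"
    using insert.prems run_in_states[OF assms(1) _ w(1)] by simp
  then obtain v where v: "v \<in> lists (alph M)" "run M (run M x w) v \<in> \<Union>(Sink M)"
    using exists_run_into_Sink[OF assms(1)] by blast
  have "run M p (w @ v) \<in> \<Union>(Sink M)" if "p \<in> insert x S" for p
  proof (cases "p = x")
    case False
    then have "run M p w \<in> \<Union>(Sink M)"
      using that w(2) by simp
    then show ?thesis
      using run_in_Union_Sink[OF _ v(1)] by (simp add: run_append)
  qed (use v(2) in \<open>simp add: run_append\<close>)
  then have "\<forall>p\<in>insert x S. run M p (w @ v) \<in> \<Union>(Sink M)"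
    by blast
  then show ?case
    using w(1) v(1) by (intro bexI[of _ "w @ v"]) auto
qed

lemma quasi_zero_Sink_nerode:
  assumes "quasi_zero M" "p \<in> \<Union>(Sink M)" "q \<in> \<Union>(Sink M)"
  shows "(p, q) \<in> nerode M"
proof -
  have "Fut M x = (if \<Union>(Sink M) \<subseteq> final M then lists (alph M) else {})"
    if x_sink: "x \<in> \<Union>(Sink M)" for x
  proof (cases "\<Union>(Sink M) \<subseteq> final M")
    case True
    then have "run M x w \<in> final M" if "w \<in> lists (alph M)" for w
      using run_in_Union_Sink[OF x_sink that] by (rule subsetD)
    with True show ?thesis
      unfolding Fut_def by auto
  next
    case False
    then have "\<Union>(Sink M) \<inter> final M = {}"
      using assms(1) unfolding quasi_zero_def by simp
    then have "run M x w \<notin> final M" if "w \<in> lists (alph M)" for w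
      using run_in_Union_Sink[OF x_sink that] by blast
    with False show ?thesis
      unfolding Fut_def by auto
  qed
  then have "Fut M p = Fut M q"
    using assms(2,3) by presburger
  moreover have "p \<in> states M" "q \<in> states M"
    using assms(2,3) by (auto simp: Sink_def)
  ultimately show ?thesis
    by (simp add: nerode_def)
qed

lemma quasi_zero_imp_zero_automaton_quotient:
  assumes "wf_dfa M" "quasi_zero M"
  shows "zero_automaton (quotient M)"
proof -
  have "init M \<in> states M"
    using assms(1) by (simp add: wf_dfa_def)
  then obtain z where z: "z \<in> \<Union>(Sink M)"
    using exists_run_into_Sink[OF assms(1)] by blast
  then have z_state: "z \<in> states M"
    unfolding Sink_def by blast
  define Z where "Z = nerode M `` {z}"
  have class_eq_Z: "nerode M `` {p} = Z" if "p \<in> \<Union>(Sink M)" for p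
    unfolding Z_def
    by (rule equiv_class_eq[OF equiv_nerode quasi_zero_Sink_nerode[OF assms(2) that z]])
  have Z_state: "Z \<in> states (quotient M)"
    using z_state unfolding Z_def by (simp add: quotientI)
  have Z_fixed: "trans (quotient M) Z a = Z" if "a \<in> alph M" for a
    using trans_quotient_class[OF assms(1) z_state that]
      class_eq_Z[OF run_in_Union_Sink[OF z, of "[a]"]] that
    unfolding Z_def by simp
  have "finite (states M)"
    using assms(1) by (simp add: wf_dfa_def)
  then obtain w where w: "w \<in> lists (alph M)" "\<forall>p\<in>states M. run M p w \<in> \<Union>(Sink M)"
    using exists_word_into_Sink[OF assms(1) _ order_refl] by blast
  have w_sync: "run (quotient M) C w = Z" if C_state: "C \<in> states (quotient M)" for C
  proof -
    obtain p where "p \<in> states M" "C = nerode M `` {p}"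
      using C_state by (auto elim: quotientE)
    then show ?thesis
      using run_quotient_class[OF assms(1) _ w(1)] class_eq_Z w(2) by simp
  qed
  show ?thesis
    unfolding zero_automaton_def alph_quotient
  proof (intro conjI)
    show "\<exists>z\<in>states (quotient M). \<forall>a\<in>alph M. trans (quotient M) z a = z"
      using Z_state Z_fixed by (intro bexI[of _ Z] ballI)
    show "\<exists>w\<in>lists (alph M). \<exists>r. \<forall>C\<in>states (quotient M). run (quotient M) C w = r"
      using w(1) w_sync by (intro bexI[of _ w] exI[of _ Z] ballI)
  qed
qed

lemma zero_automaton_quotient_imp_quasi_zero:
  assumes "wf_dfa M" "zero_automaton (quotient M)"
  shows "quasi_zero M"
proof -
  obtain Z w r where Z: "Z \<in> states (quotient M)" "\<forall>a\<in>alph M. trans (quotient M) Z a = Z"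
    and w: "w \<in> lists (alph M)" "\<forall>C\<in>states (quotient M). run (quotient M) C w = r"
    using assms(2) unfolding zero_automaton_def alph_quotient by blast
  have class_eq_Z: "nerode M `` {p} = Z" if p_sink: "p \<in> \<Union>(Sink M)" for p
  proof -
    obtain P where P: "P \<in> Sink M" "p \<in> P"
      using p_sink by blast
    have p_state: "p \<in> states M"
      using P by (simp add: Sink_def subset_iff)
    have "run M p w \<in> P"
      using P w(1) by (simp add: Sink_def)
    moreover have "\<forall>x\<in>P. \<forall>y\<in>P. \<exists>v\<in>lists (alph M). run M x v = y"
      using P(1) by (simp add: Sink_def)
    ultimately obtain v where v: "v \<in> lists (alph M)" "run M (run M p w) v = p"
      using P(2) by blast
    have "nerode M `` {p} = run (quotient M) (nerode M `` {p}) (w @ v)"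
      using run_quotient_class[OF assms(1) p_state, of "w @ v"] v w(1) by (simp add: run_append)
    also have "\<dots> = run (quotient M) (run (quotient M) (nerode M `` {p}) w) v"
      by (rule run_append)
    also have "run (quotient M) (nerode M `` {p}) w = Z"
      using synchronising_word_reaches_fixed_state[of Z "quotient M" w r] Z w p_state
      by (simp add: quotientI)
    also have "run (quotient M) Z v = Z"
      using run_fixed_state[of "quotient M"] Z(2) v(1) by simp
    finally show ?thesis .
  qed
  obtain z where z: "z \<in> states M" "Z = nerode M `` {z}"
    using Z(1) by (auto elim: quotientE)
  have final_iff: "p \<in> final M \<longleftrightarrow> z \<in> final M" if p_sink: "p \<in> \<Union>(Sink M)" for p
  proof -
    have "p \<in> states M"
      using p_sink by (auto simp: Sink_def)
    then have "(p, z) \<in> nerode M"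
      using eq_equiv_class_iff[OF equiv_nerode _ z(1)] class_eq_Z[OF p_sink] z(2) by simp
    then show ?thesis
      by (rule nerode_final_iff)
  qed
  show ?thesis
  proof (cases "z \<in> final M")
    case True
    then have "\<Union>(Sink M) \<subseteq> final M"
      using final_iff by blast
    then show ?thesis
      by (simp add: quasi_zero_def)
  next
    case False
    then have "\<Union>(Sink M) \<inter> final M = {}"
      using final_iff by blast
    then show ?thesis
      by (simp add: quasi_zero_def)
  qed
qed

theorem proposition7:
  fixes M :: "('q, 'a) dfa"
  assumes "wf_dfa M"
  shows "quasi_zero M \<longleftrightarrow> zero_automaton (quotient M)"
  using quasi_zero_imp_zero_automaton_quotient[OF assms]
    zero_automaton_quotient_imp_quasi_zero[OF assms] by blast

end
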